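(* Let $\alpha$ be an ordinal and let $X$ be a metric space with $X=\bigcup_{i\in I}X_i$. Suppose that $\{X_i\}_{i\in I}\in\mathfrak{C}_\alpha$ and that for every $r>0$ there is a subspace $Y(r)\subset X$ such that the collection $\{X_i\setminus Y(r)\}_{i\in I}$ is $r$-disjoint, where moreover $\{Y(r)\}_{r>0}\in\mathfrak{C}_\alpha$. Then $\{X\}\in\mathfrak{C}_\alpha$.
   Context: A family $\mathcal{U}$ of metric subspaces of a metric space $(X,d)$ is $r$-disjoint if $d(x,y)>r$ whenever $x\in U$, $y\in U'$, $U\neq U'$ in $\mathcal{U}$. For families $\mathcal{X},\mathcal{Y}$ and $R\in\mathbb{R}^{\mathbb{N}}$, $\mathcal{X}\xrightarrow{R}\mathcal{Y}$ means: there is an integer $k$ such that for each $X\in\mathcal{X}$ there are subcollections $\mathcal{U}_1,\dots,\mathcal{U}_k\subseteq\mathcal{Y}$ of subspaces of $X$, each $\mathcal{U}_i$ being $R_i$-disjoint, with $\bigcup_i\mathcal{U}_i$ covering $X$. A family is bounded if the diameters of its members are uniformly bounded. $\mathfrak{C}_0$ is the class of bounded families; for an ordinal $\alpha>0$, $\mathfrak{C}_\alpha$ is the class of families $\mathcal{X}$ such that for every $R\in\mathbb{R}^{\mathbb{N}}$ there exist $\beta<\alpha$ and $\mathcal{Y}\in\mathfrak{C}_\beta$ with $\mathcal{X}\xrightarrow{R}\mathcal{Y}$. All subspaces carry the induced metric. *)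

theory Defs
  imports "HOL-Analysis.Analysis"
begin

text \<open>Families of metric subspaces are modelled as sets of subsets of an ambient
  metric space (type class metric_space); subspaces carry the induced metric.
  Ordinals are modelled as elements of an arbitrary well-ordered type.\<close>

definition r_disjoint :: "real \<Rightarrow> 'a::metric_space set set \<Rightarrow> bool" where
  "r_disjoint r U \<longleftrightarrow>
     (\<forall>A\<in>U. \<forall>B\<in>U. A \<noteq> B \<longrightarrow> (\<forall>x\<in>A. \<forall>y\<in>B. dist x y > r))"

definition bounded_family :: "'a::metric_space set set \<Rightarrow> bool" where
  "bounded_family F \<longleftrightarrow> (\<exists>D. \<forall>A\<in>F. \<forall>x\<in>A. \<forall>y\<in>A. dist x y \<le> D)"

definition decomposes :: "(nat \<Rightarrow> real) \<Rightarrow> 'a::metric_space set set \<Rightarrow> 'a set set \<Rightarrow> bool" where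
  "decomposes R XX YY \<longleftrightarrow>
     (\<exists>k::nat. \<forall>X\<in>XX. \<exists>U :: nat \<Rightarrow> 'a set set.
        (\<forall>i\<in>{1..k}. U i \<subseteq> YY \<and> (\<forall>V\<in>U i. V \<subseteq> X) \<and> r_disjoint (R i) (U i))
        \<and> X \<subseteq> (\<Union>i\<in>{1..k}. \<Union>(U i)))"

text \<open>Cclass alpha is the class C_alpha (well-founded recursion on the ordinal,
  realised as an inductive definition; the fixpoint is unique by well-foundedness).\<close>
inductive inC :: "'o::wellorder \<Rightarrow> 'a::metric_space set set \<Rightarrow> bool" where
  zero: "\<lbrakk>\<not> (\<exists>\<beta>. \<beta> < \<alpha>); bounded_family XX\<rbrakk> \<Longrightarrow> inC \<alpha> XX"
| succ: "\<lbrakk>\<exists>\<beta>. \<beta> < \<alpha>;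
          \<forall>R. \<exists>\<beta><\<alpha>. \<exists>YY. inC \<beta> YY \<and> decomposes R XX YY\<rbrakk> \<Longrightarrow> inC \<alpha> XX"

definition Cclass :: "'o::wellorder \<Rightarrow> 'a::metric_space set set set" where
  "Cclass \<alpha> = {XX. inC \<alpha> XX}"

end

theory Submission
  imports Defs
begin

text \<open>Given R, decompose the X_i with the radii R_1, ..., R_k into a family of class
  \<beta>_1 < \<alpha>, choose r at least all these R_j, and decompose Y(r) with the remaining
  radii R_(k+1), ... into a family of class \<beta>_2 < \<alpha>. Cutting Y(r) out of the pieces
  of the X_i keeps them R_j-disjoint, also across different i, because the sets
  X_i - Y(r) are r-disjoint; together with the pieces of Y(r) they cover X. The new pieces
  are subsets of old ones, and C_\<beta> is closed under passing to subsets of members and under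
  finite unions. If \<alpha> is minimal, two points of X farther apart than the uniform diameter
  bound D but closer than r must be separated by Y(r); so no three points of X are pairwise
  more than D apart, and X is bounded.\<close>

definition is_decomposition ::
  "nat \<Rightarrow> (nat \<Rightarrow> real) \<Rightarrow> 'a::metric_space set \<Rightarrow> 'a set set \<Rightarrow> (nat \<Rightarrow> 'a set set) \<Rightarrow> bool" where
  "is_decomposition k R X YY U \<longleftrightarrow>
     (\<forall>i\<in>{1..k}. U i \<subseteq> YY \<and> (\<forall>V\<in>U i. V \<subseteq> X) \<and> r_disjoint (R i) (U i))
     \<and> X \<subseteq> (\<Union>i\<in>{1..k}. \<Union>(U i))"

lemma is_decompositionI:
  assumes "\<And>i. i \<in> {1..k} \<Longrightarrow> U i \<subseteq> YY"
    and "\<And>i V. i \<in> {1..k} \<Longrightarrow> V \<in> U i \<Longrightarrow> V \<subseteq> X"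
    and "\<And>i. i \<in> {1..k} \<Longrightarrow> r_disjoint (R i) (U i)"
    and "X \<subseteq> (\<Union>i\<in>{1..k}. \<Union>(U i))"
  shows "is_decomposition k R X YY U"
  using assms unfolding is_decomposition_def by simp

lemma is_decompositionD:
  assumes "is_decomposition k R X YY U" "i \<in> {1..k}"
  shows "U i \<subseteq> YY" "\<And>V. V \<in> U i \<Longrightarrow> V \<subseteq> X" "r_disjoint (R i) (U i)"
  using assms unfolding is_decomposition_def by auto

lemma is_decomposition_cover:
  assumes "is_decomposition k R X YY U" "x \<in> X"
  obtains i V where "i \<in> {1..k}" "V \<in> U i" "x \<in> V"
  using assms unfolding is_decomposition_def by auto

lemma r_disjointD:
  "r_disjoint r U \<Longrightarrow> A \<in> U \<Longrightarrow> B \<in> U \<Longrightarrow> A \<noteq> B \<Longrightarrow> x \<in> A \<Longrightarrow> y \<in> B \<Longrightarrow> r < dist x y"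
  unfolding r_disjoint_def by blast

lemma decomposes_iff: "decomposes R XX YY \<longleftrightarrow> (\<exists>k. \<forall>X\<in>XX. \<exists>U. is_decomposition k R X YY U)"
  unfolding decomposes_def is_decomposition_def by simp

definition down_closure :: "'a set set \<Rightarrow> 'a set set" where
  "down_closure YY = {S. \<exists>V\<in>YY. S \<subseteq> V}"

lemma r_disjoint_image_Int: "r_disjoint r U \<Longrightarrow> r_disjoint r ((\<lambda>V. V \<inter> A) ` U)"
  unfolding r_disjoint_def by blast

lemma is_decomposition_restrict:
  assumes "is_decomposition k R B YY U" "A \<subseteq> B"
  shows "is_decomposition k R A (down_closure YY) (\<lambda>i. (\<lambda>V. V \<inter> A) ` U i)"
proof (rule is_decompositionI)
  fix i assume "i \<in> {1..k}"
  note Ui = is_decompositionD[OF assms(1) this]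
  show "(\<lambda>V. V \<inter> A) ` U i \<subseteq> down_closure YY"
    using Ui(1) unfolding down_closure_def by blast
  show "r_disjoint (R i) ((\<lambda>V. V \<inter> A) ` U i)"
    using Ui(3) by (rule r_disjoint_image_Int)
next
  show "V \<subseteq> A" if "V \<in> (\<lambda>V. V \<inter> A) ` U i" for i V
    using that by blast
  show "A \<subseteq> (\<Union>i\<in>{1..k}. \<Union>((\<lambda>V. V \<inter> A) ` U i))"
  proof
    fix x assume "x \<in> A"
    with assms(2) have "x \<in> B" by blast
    with assms(1) obtain i V where "i \<in> {1..k}" "V \<in> U i" "x \<in> V"
      by (rule is_decomposition_cover)
    then show "x \<in> (\<Union>i\<in>{1..k}. \<Union>((\<lambda>V. V \<inter> A) ` U i))"
      using \<open>x \<in> A\<close> by blast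
  qed
qed

lemma is_decomposition_Union:
  assumes "r_disjoint r PP" "\<forall>i\<in>{1..k}. R i \<le> r"
    and dec: "\<And>B. B \<in> PP \<Longrightarrow> is_decomposition k R B YY (U B)"
  shows "is_decomposition k R (\<Union>PP) YY (\<lambda>i. \<Union>B\<in>PP. U B i)"
proof (rule is_decompositionI)
  fix i assume i: "i \<in> {1..k}"
  show "(\<Union>B\<in>PP. U B i) \<subseteq> YY"
    using is_decompositionD(1)[OF dec i] by blast
  show "V \<subseteq> \<Union>PP" if "V \<in> (\<Union>B\<in>PP. U B i)" for V
    using is_decompositionD(2)[OF dec i] that by blast
  show "r_disjoint (R i) (\<Union>B\<in>PP. U B i)"
    unfolding r_disjoint_def
  proof (intro ballI impI)
    fix V V' x y
    assume "V \<in> (\<Union>B\<in>PP. U B i)" "V' \<in> (\<Union>B\<in>PP. U B i)" "V \<noteq> V'" "x \<in> V" "y \<in> V'"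
    then obtain B B' where B: "B \<in> PP" "V \<in> U B i" and B': "B' \<in> PP" "V' \<in> U B' i" by blast
    show "R i < dist x y"
    proof (cases "B = B'")
      case True
      with B'(2) have "V' \<in> U B i" by simp
      with is_decompositionD(3)[OF dec[OF B(1)] i] B(2) \<open>V \<noteq> V'\<close> \<open>x \<in> V\<close> \<open>y \<in> V'\<close>
      show ?thesis by (blast intro: r_disjointD)
    next
      case False
      have "x \<in> B" "y \<in> B'"
        using is_decompositionD(2)[OF dec[OF B(1)] i B(2)] is_decompositionD(2)[OF dec[OF B'(1)] i B'(2)]
          \<open>x \<in> V\<close> \<open>y \<in> V'\<close> by auto
      with assms(1) B(1) B'(1) False have "r < dist x y"
        by (intro r_disjointD[of r PP B B'])
      then show ?thesis using assms(2) i by fastforce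
    qed
  qed
next
  show "\<Union>PP \<subseteq> (\<Union>i\<in>{1..k}. \<Union>(\<Union>B\<in>PP. U B i))"
  proof
    fix x assume "x \<in> \<Union>PP"
    then obtain B where "B \<in> PP" "x \<in> B" by blast
    obtain i V where "i \<in> {1..k}" "V \<in> U B i" "x \<in> V"
      using dec[OF \<open>B \<in> PP\<close>] \<open>x \<in> B\<close> by (rule is_decomposition_cover)
    then show "x \<in> (\<Union>i\<in>{1..k}. \<Union>(\<Union>B\<in>PP. U B i))"
      using \<open>B \<in> PP\<close> by blast
  qed
qed

lemma is_decomposition_append:
  assumes "is_decomposition k R A YY U" "is_decomposition l (\<lambda>i. R (i + k)) B ZZ V"
  shows "is_decomposition (k + l) R (A \<union> B) (YY \<union> ZZ) (\<lambda>i. if i \<le> k then U i else V (i - k))"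
proof -
  define W where "W = (\<lambda>i. if i \<le> k then U i else V (i - k))"
  have W: "W i \<subseteq> YY \<union> ZZ \<and> (\<forall>S\<in>W i. S \<subseteq> A \<union> B) \<and> r_disjoint (R i) (W i)"
    if i: "i \<in> {1..k + l}" for i
  proof (cases "i \<le> k")
    case True
    then have "i \<in> {1..k}" using i by simp
    from is_decompositionD[OF assms(1) this] True show ?thesis
      unfolding W_def by auto
  next
    case False
    then have "i - k \<in> {1..l}" "i - k + k = i" using i by auto
    from is_decompositionD[OF assms(2) this(1)] False this(2) show ?thesis
      unfolding W_def by auto
  qed
  have "A \<union> B \<subseteq> (\<Union>i\<in>{1..k + l}. \<Union>(W i))"
  proof
    fix x assume "x \<in> A \<union> B"
    then show "x \<in> (\<Union>i\<in>{1..k + l}. \<Union>(W i))"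
    proof
      assume "x \<in> A"
      with assms(1) obtain i S where "i \<in> {1..k}" "S \<in> U i" "x \<in> S"
        by (rule is_decomposition_cover)
      then show ?thesis unfolding W_def by force
    next
      assume "x \<in> B"
      with assms(2) obtain i S where "i \<in> {1..l}" "S \<in> V i" "x \<in> S"
        by (rule is_decomposition_cover)
      then show ?thesis unfolding W_def by (intro UN_I[of "i + k"]) auto
    qed
  qed
  with W have "is_decomposition (k + l) R (A \<union> B) (YY \<union> ZZ) W"
    by (intro is_decompositionI) simp_all
  then show ?thesis unfolding W_def .
qed

lemma is_decomposition_pad:
  assumes "is_decomposition k R X YY U" "k \<le> l" "YY \<subseteq> YY'"
  shows "is_decomposition l R X YY' (\<lambda>i. if i \<le> k then U i else {})"
proof (rule is_decompositionI)
  fix i assume i: "i \<in> {1..l}"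
  show "(if i \<le> k then U i else {}) \<subseteq> YY'"
    using is_decompositionD(1)[OF assms(1), of i] i assms(3) by auto
  show "r_disjoint (R i) (if i \<le> k then U i else {})"
    using is_decompositionD(3)[OF assms(1), of i] i by (auto simp: r_disjoint_def)
  show "V \<subseteq> X" if "V \<in> (if i \<le> k then U i else {})" for V
    using is_decompositionD(2)[OF assms(1), of i] i that by (auto split: if_splits)
next
  show "X \<subseteq> (\<Union>i\<in>{1..l}. \<Union>(if i \<le> k then U i else {}))"
  proof
    fix x assume "x \<in> X"
    with assms(1) obtain i V where "i \<in> {1..k}" "V \<in> U i" "x \<in> V"
      by (rule is_decomposition_cover)
    with assms(2) show "x \<in> (\<Union>i\<in>{1..l}. \<Union>(if i \<le> k then U i else {}))"
      by force
  qed
qed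

lemma inC_minimal_iff: "\<not> (\<exists>\<beta>. \<beta> < \<alpha>) \<Longrightarrow> inC \<alpha> XX \<longleftrightarrow> bounded_family XX"
  by (auto elim: inC.cases intro: inC.zero)

lemma inC_nonminimal_iff:
  "\<exists>\<beta>. \<beta> < \<alpha> \<Longrightarrow> inC \<alpha> XX \<longleftrightarrow> (\<forall>R. \<exists>\<beta><\<alpha>. \<exists>YY. inC \<beta> YY \<and> decomposes R XX YY)"
  by (auto elim: inC.cases intro: inC.succ)

lemma decomposes_refl: "decomposes R XX XX"
  unfolding decomposes_iff
proof (intro exI[of _ 1] ballI)
  fix X assume "X \<in> XX"
  then have "is_decomposition 1 R X XX (\<lambda>_. {X})"
    unfolding is_decomposition_def r_disjoint_def by auto
  then show "\<exists>U. is_decomposition 1 R X XX U" by blast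
qed

lemma inC_mono:
  assumes "inC \<beta> XX" "\<beta> \<le> \<alpha>"
  shows "inC \<alpha> XX"
proof (cases "\<beta> = \<alpha>")
  case False
  with assms(2) have "\<beta> < \<alpha>" by simp
  show ?thesis
  proof (rule inC.succ)
    show "\<exists>\<beta>. \<beta> < \<alpha>" using \<open>\<beta> < \<alpha>\<close> by blast
    show "\<forall>R. \<exists>\<beta><\<alpha>. \<exists>YY. inC \<beta> YY \<and> decomposes R XX YY"
      using \<open>\<beta> < \<alpha>\<close> assms(1) decomposes_refl by blast
  qed
qed (use assms(1) in simp)

lemma bounded_family_down_closure:
  assumes "bounded_family XX"
  shows "bounded_family (down_closure XX)"
proof -
  obtain D where "\<And>A x y. A \<in> XX \<Longrightarrow> x \<in> A \<Longrightarrow> y \<in> A \<Longrightarrow> dist x y \<le> D"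
    using assms unfolding bounded_family_def by blast
  then have "\<forall>A\<in>down_closure XX. \<forall>x\<in>A. \<forall>y\<in>A. dist x y \<le> D"
    unfolding down_closure_def by blast
  then show ?thesis unfolding bounded_family_def by blast
qed

lemma decomposes_down_closure:
  assumes "decomposes R XX YY"
  shows "decomposes R (down_closure XX) (down_closure YY)"
proof -
  obtain k where k: "\<forall>B\<in>XX. \<exists>U. is_decomposition k R B YY U"
    using assms unfolding decomposes_iff by blast
  have "\<exists>U. is_decomposition k R A (down_closure YY) U" if "A \<in> down_closure XX" for A
  proof -
    obtain B U where "A \<subseteq> B" "is_decomposition k R B YY U"
      using k \<open>A \<in> down_closure XX\<close> unfolding down_closure_def by blast
    then show ?thesis by (blast intro: is_decomposition_restrict)
  qed
  then show ?thesis unfolding decomposes_iff by blast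
qed

lemma inC_down_closure: "inC \<alpha> XX \<Longrightarrow> inC \<alpha> (down_closure XX)"
proof (induction \<alpha> arbitrary: XX rule: less_induct)
  case (less \<alpha>)
  show ?case
  proof (cases "\<exists>\<beta>. \<beta> < \<alpha>")
    case False
    then show ?thesis
      using less.prems bounded_family_down_closure by (simp add: inC_minimal_iff)
  next
    case True
    show ?thesis unfolding inC_nonminimal_iff[OF True]
    proof
      fix R
      obtain \<beta> YY where "\<beta> < \<alpha>" "inC \<beta> YY" "decomposes R XX YY"
        using less.prems inC_nonminimal_iff[OF True] by blast
      then show "\<exists>\<beta><\<alpha>. \<exists>YY. inC \<beta> YY \<and> decomposes R (down_closure XX) YY"
        using less.IH decomposes_down_closure by blast
    qed
  qed
qed

lemma bounded_family_Un:
  assumes "bounded_family XX" "bounded_family YY"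
  shows "bounded_family (XX \<union> YY)"
proof -
  obtain D E where
    D: "\<And>A x y. A \<in> XX \<Longrightarrow> x \<in> A \<Longrightarrow> y \<in> A \<Longrightarrow> dist x y \<le> D" and
    E: "\<And>A x y. A \<in> YY \<Longrightarrow> x \<in> A \<Longrightarrow> y \<in> A \<Longrightarrow> dist x y \<le> E"
    using assms unfolding bounded_family_def by metis
  have "dist x y \<le> max D E" if "A \<in> XX \<union> YY" "x \<in> A" "y \<in> A" for A x y
    using that D[of A x y] E[of A x y] by fastforce
  then show ?thesis unfolding bounded_family_def by blast
qed

lemma decomposes_Un:
  assumes "decomposes R XX1 YY1" "decomposes R XX2 YY2"
  shows "decomposes R (XX1 \<union> XX2) (YY1 \<union> YY2)"
proof -
  obtain k1 k2 where
    k1: "\<forall>X\<in>XX1. \<exists>U. is_decomposition k1 R X YY1 U" and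
    k2: "\<forall>X\<in>XX2. \<exists>U. is_decomposition k2 R X YY2 U"
    using assms unfolding decomposes_iff by blast
  have "\<exists>U. is_decomposition (max k1 k2) R X (YY1 \<union> YY2) U" if "X \<in> XX1 \<union> XX2" for X
  proof (cases "X \<in> XX1")
    case True
    with k1 obtain U where "is_decomposition k1 R X YY1 U" by blast
    then have "is_decomposition (max k1 k2) R X (YY1 \<union> YY2) (\<lambda>i. if i \<le> k1 then U i else {})"
      by (rule is_decomposition_pad) auto
    then show ?thesis by blast
  next
    case False
    with that k2 obtain U where "is_decomposition k2 R X YY2 U" by blast
    then have "is_decomposition (max k1 k2) R X (YY1 \<union> YY2) (\<lambda>i. if i \<le> k2 then U i else {})"
      by (rule is_decomposition_pad) auto
    then show ?thesis by blast
  qed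
  then show ?thesis unfolding decomposes_iff by blast
qed

lemma inC_Un: "inC \<alpha> XX1 \<Longrightarrow> inC \<alpha> XX2 \<Longrightarrow> inC \<alpha> (XX1 \<union> XX2)"
proof (induction \<alpha> arbitrary: XX1 XX2 rule: less_induct)
  case (less \<alpha>)
  show ?case
  proof (cases "\<exists>\<beta>. \<beta> < \<alpha>")
    case False
    then show ?thesis using less.prems bounded_family_Un by (simp add: inC_minimal_iff)
  next
    case True
    show ?thesis unfolding inC_nonminimal_iff[OF True]
    proof
      fix R
      obtain \<beta>1 YY1 where "\<beta>1 < \<alpha>" "inC \<beta>1 YY1" "decomposes R XX1 YY1"
        using less.prems(1) inC_nonminimal_iff[OF True] by blast
      moreover obtain \<beta>2 YY2 where "\<beta>2 < \<alpha>" "inC \<beta>2 YY2" "decomposes R XX2 YY2"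
        using less.prems(2) inC_nonminimal_iff[OF True] by blast
      moreover have "inC (max \<beta>1 \<beta>2) YY1" "inC (max \<beta>1 \<beta>2) YY2"
        using calculation by (auto intro: inC_mono)
      ultimately have "max \<beta>1 \<beta>2 < \<alpha>" "inC (max \<beta>1 \<beta>2) (YY1 \<union> YY2)"
        and "decomposes R (XX1 \<union> XX2) (YY1 \<union> YY2)"
        by (simp_all add: less.IH decomposes_Un)
      then show "\<exists>\<beta><\<alpha>. \<exists>YY. inC \<beta> YY \<and> decomposes R (XX1 \<union> XX2) YY"
        by blast
    qed
  qed
qed

lemma bounded_family_singleton: "bounded_family {S} \<longleftrightarrow> bounded S"
  by (simp add: bounded_family_def bounded_two_points)

lemma bounded_if_no_far_triple:
  fixes S :: "'a::metric_space set"
  assumes "\<And>x y z. x \<in> S \<Longrightarrow> y \<in> S \<Longrightarrow> z \<in> S \<Longrightarrow> D < dist x y \<Longrightarrow> D < dist y z \<Longrightarrow> dist x z \<le> D"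
  shows "bounded S"
proof (cases "\<exists>x\<in>S. \<exists>y\<in>S. D < dist x y")
  case False
  then show ?thesis by (auto simp: bounded_two_points not_less)
next
  case True
  then obtain x y where xy: "x \<in> S" "y \<in> S" "D < dist x y" by blast
  have "dist x z \<le> dist x y + D" if "z \<in> S" for z
  proof (cases "D < dist y z")
    case True
    then have "dist x z \<le> D" using assms xy that by blast
    then show ?thesis using zero_le_dist[of x y] by linarith
  next
    case False
    then show ?thesis using dist_triangle[of x z y] by linarith
  qed
  then show ?thesis unfolding bounded_def by blast
qed

lemma bounded_Union_separated:
  assumes X: "X = (\<Union>i\<in>I. Xs i)"
    and sep: "\<forall>r>0. Y r \<subseteq> X \<and> r_disjoint r ((\<lambda>i. Xs i - Y r) ` I)"
    and "bounded_family (Xs ` I)" "bounded_family (Y ` {0<..})"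
  shows "bounded X"
proof -
  obtain D where D0: "\<forall>A\<in>Xs ` I \<union> Y ` {0<..}. \<forall>x\<in>A. \<forall>y\<in>A. dist x y \<le> D"
    using bounded_family_Un[OF assms(3,4)] unfolding bounded_family_def by (elim exE)
  then have D: "dist x y \<le> D" if "A \<in> Xs ` I \<union> Y ` {0<..}" "x \<in> A" "y \<in> A" for A x y
    using that by blast
  have separates: "x \<in> Y r \<longleftrightarrow> y \<notin> Y r"
    if xy: "x \<in> X" "y \<in> X" "D < dist x y" "dist x y < r" for x y r
  proof -
    have "r > 0" using xy(4) zero_le_dist[of x y] by linarith
    then have "Y r \<in> Xs ` I \<union> Y ` {0<..}" by simp
    then have "\<not> (x \<in> Y r \<and> y \<in> Y r)"
      using D[of "Y r" x y] xy(3) by linarith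
    moreover have "\<not> (x \<notin> Y r \<and> y \<notin> Y r)"
    proof
      assume out: "x \<notin> Y r \<and> y \<notin> Y r"
      obtain i j where ij: "i \<in> I" "j \<in> I" "x \<in> Xs i" "y \<in> Xs j"
        using xy(1,2) unfolding X by blast
      show False
      proof (cases "Xs i - Y r = Xs j - Y r")
        case True
        then have "y \<in> Xs i" using ij(4) out by blast
        then show False using D[of "Xs i" x y] ij(1,3) xy(3) by simp
      next
        case False
        have "r_disjoint r ((\<lambda>i. Xs i - Y r) ` I)" using sep \<open>r > 0\<close> by blast
        moreover have "x \<in> Xs i - Y r" "y \<in> Xs j - Y r" using ij out by simp_all
        ultimately have "r < dist x y"
          using r_disjointD[OF _ imageI[OF ij(1)] imageI[OF ij(2)] False] by blast
        then show False using xy(4) by linarith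
      qed
    qed
    ultimately show ?thesis by blast
  qed
  show ?thesis
  proof (rule bounded_if_no_far_triple)
    fix x y z assume xyz: "x \<in> X" "y \<in> X" "z \<in> X" "D < dist x y" "D < dist y z"
    show "dist x z \<le> D"
    proof (rule ccontr)
      assume "\<not> dist x z \<le> D"
      then have "D < dist x z" by simp
      define r where "r = dist x y + dist y z + dist x z + 1"
      have r: "dist x y < r" "dist y z < r" "dist x z < r"
        unfolding r_def using zero_le_dist[of x y] zero_le_dist[of y z] zero_le_dist[of x z] by linarith+
      have "x \<in> Y r \<longleftrightarrow> y \<notin> Y r" using xyz(1,2,4) r(1) by (rule separates)
      moreover have "y \<in> Y r \<longleftrightarrow> z \<notin> Y r" using xyz(2,3,5) r(2) by (rule separates)
      moreover have "x \<in> Y r \<longleftrightarrow> z \<notin> Y r" using xyz(1,3) \<open>D < dist x z\<close> r(3) by (rule separates)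
      ultimately show False by blast
    qed
  qed
qed


lemma decomposes_Union_separated:
  assumes X: "X = (\<Union>i\<in>I. Xs i)"
    and sep: "\<forall>r>0. Y r \<subseteq> X \<and> r_disjoint r ((\<lambda>i. Xs i - Y r) ` I)"
    and dec_Xs: "\<forall>S\<in>Xs ` I. \<exists>U. is_decomposition k R S ZZ U"
    and dec_Y: "decomposes (\<lambda>i. R (i + k)) (Y ` {0<..}) WW"
  shows "decomposes R {X} (down_closure ZZ \<union> WW)"
proof -
  define r where "r = Max (insert 1 (R ` {1..k}))"
  have "1 \<le> r" and rR: "\<forall>i\<in>{1..k}. R i \<le> r"
    unfolding r_def by (auto intro!: Max_ge simp del: Max_insert)
  then have Yr: "Y r \<subseteq> X" "r_disjoint r ((\<lambda>i. Xs i - Y r) ` I)"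
    using sep by simp_all
  obtain l V where V: "is_decomposition l (\<lambda>i. R (i + k)) (Y r) WW V"
    using dec_Y \<open>1 \<le> r\<close> unfolding decomposes_iff by force
  have "\<exists>U. is_decomposition k R B (down_closure ZZ) U" if B: "B \<in> (\<lambda>i. Xs i - Y r) ` I" for B
  proof -
    obtain i where "i \<in> I" "B = Xs i - Y r" using B by blast
    moreover from this dec_Xs obtain U where "is_decomposition k R (Xs i) ZZ U" by blast
    ultimately show ?thesis using is_decomposition_restrict[of k R "Xs i" ZZ U B] by blast
  qed
  then obtain U where
    "\<And>B. B \<in> (\<lambda>i. Xs i - Y r) ` I \<Longrightarrow> is_decomposition k R B (down_closure ZZ) (U B)"
    by metis
  from is_decomposition_Union[OF Yr(2) rR this]
  have "is_decomposition k R (X - Y r) (down_closure ZZ) (\<lambda>i. \<Union>B\<in>(\<lambda>i. Xs i - Y r) ` I. U B i)"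
    unfolding X UN_extend_simps(6) .
  from is_decomposition_append[OF this V]
  have "is_decomposition (k + l) R X (down_closure ZZ \<union> WW)
    (\<lambda>i. if i \<le> k then \<Union>B\<in>(\<lambda>i. Xs i - Y r) ` I. U B i else V (i - k))"
    using Yr(1) by (simp add: Un_absorb2)
  then show ?thesis unfolding decomposes_iff by blast
qed

theorem theorem4p3:
  fixes \<alpha> :: "'o::wellorder"
    and X :: "'a::metric_space set"
    and I :: "'i set"
    and Xs :: "'i \<Rightarrow> 'a set"
    and Y :: "real \<Rightarrow> 'a set"
  assumes "X = (\<Union>i\<in>I. Xs i)"
    and "Xs ` I \<in> Cclass \<alpha>"
    and "\<forall>r>0. Y r \<subseteq> X \<and> r_disjoint r ((\<lambda>i. Xs i - Y r) ` I)"
    and "Y ` {0<..} \<in> Cclass \<alpha>"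
  shows "{X} \<in> Cclass \<alpha>"
proof (cases "\<exists>\<beta>. \<beta> < \<alpha>")
  case False
  then show ?thesis
    using assms bounded_Union_separated[OF assms(1,3)]
    by (simp add: Cclass_def inC_minimal_iff bounded_family_singleton)
next
  case True
  have hyps: "inC \<alpha> (Xs ` I)" "inC \<alpha> (Y ` {0<..})"
    using assms(2,4) unfolding Cclass_def by simp_all
  have "inC \<alpha> {X}" unfolding inC_nonminimal_iff[OF True]
  proof
    fix R
    obtain \<beta>1 ZZ where \<beta>1: "\<beta>1 < \<alpha>" "inC \<beta>1 ZZ" and "decomposes R (Xs ` I) ZZ"
      using hyps(1) inC_nonminimal_iff[OF True] by blast
    then obtain k where dec_Xs: "\<forall>S\<in>Xs ` I. \<exists>U. is_decomposition k R S ZZ U"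
      unfolding decomposes_iff by blast
    obtain \<beta>2 WW where \<beta>2: "\<beta>2 < \<alpha>" "inC \<beta>2 WW"
      and dec_Y: "decomposes (\<lambda>i. R (i + k)) (Y ` {0<..}) WW"
      using hyps(2) inC_nonminimal_iff[OF True] by blast
    from dec_Xs dec_Y have "decomposes R {X} (down_closure ZZ \<union> WW)"
      by (rule decomposes_Union_separated[OF assms(1,3)])
    moreover have "inC (max \<beta>1 \<beta>2) (down_closure ZZ \<union> WW)"
      using \<beta>1 \<beta>2 by (intro inC_Un inC_down_closure) (auto elim: inC_mono)
    ultimately show "\<exists>\<beta><\<alpha>. \<exists>YY. inC \<beta> YY \<and> decomposes R {X} YY"
      using \<beta>1(1) \<beta>2(1) by (metis max_less_iff_conj)
  qed
  then show ?thesis unfolding Cclass_def by simp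
qed

end
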